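(* Let $N\ge 1$ and let the parameter space $\Theta\subseteq\mathcal{R}$ of the correlated Bernoulli random graph model be nondegenerate. Then the disagreement vector statistic $\mathcal{H}$ is a complete and sufficient statistic for the family $\{\mathbb{P}_\theta:\theta\in\Theta\}$. Completeness here means: for every $f:\{0,\star,1\}^N\to\mathbb{R}$, if $\mathbb{E}_\theta(f(\mathcal{H}))=0$ for all $\theta\in\Theta$, then $f$ is the zero function.
   Context: Correlated Bernoulli random graph model: fix a positive integer $N$ and let $\mathcal{R}=\{(p_1,\dots,p_N,\varrho_1,\dots,\varrho_N): p_i,\varrho_i\in[0,1]\}$. A parameter space is any subset $\Theta\subseteq\mathcal{R}$. For $\theta=(p_1,\dots,p_N,\varrho_1,\dots,\varrho_N)\in\Theta$, the random vectors $X=(X_1,\dots,X_N)$, $Y=(Y_1,\dots,Y_N)\in\{0,1\}^N$ are such that the pairs $(X_i,Y_i)$, $i=1,\dots,N$, are independent; $X_i,Y_i$ are each marginally Bernoulli$(p_i)$ with Pearson correlation $\varrho_i$. Equivalently $\mathbb{P}(X_i=Y_i=1)=p_i^2+\varrho_ip_i(1-p_i)$, $\mathbb{P}(X_i=Y_i=0)=(1-p_i)^2+\varrho_ip_i(1-p_i)$, $\mathbb{P}(X_i=1,Y_i=0)=\mathbb{P}(X_i=0,Y_i=1)=(1-\varrho_i)p_i(1-p_i)$. The sample space is $\mathcal{X}=\{(x,y):x,y\in\{0,1\}^N\}$; a statistic is any function on $\mathcal{X}$. Let $\mathcal{R}^o=\{(p_1,\dots,p_N,0,\dots,0):p_1,\dots,p_N\in\mathbb{R}\}$.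 $\Theta$ is called nondegenerate if $\Theta\cap\mathcal{R}^o$ has an interior point relative to $\mathcal{R}^o$, i.e. there exist $z\in\Theta\cap\mathcal{R}^o$ and $\epsilon>0$ such that $\Theta\cap\mathcal{R}^o$ contains every point of $\mathcal{R}^o$ at distance less than $\epsilon$ from $z$. The disagreement vector statistic $\mathcal{H}:\mathcal{X}\to\{0,\star,1\}^N$ has $i$th component $1$ if $x_i=y_i=1$, $0$ if $x_i=y_i=0$, and $\star$ if $x_i\ne y_i$. *)

theory Defs
  imports Complex_Main
begin

text \<open>Vectors in \<open>{0,1}^N\<close> (resp. \<open>\<real>^N\<close>, \<open>{0,\<star>,1}^N\<close>) are represented as
  functions on \<open>nat\<close> indexed by \<open>0..<N\<close> with a fixed default value outside.\<close>

type_synonym param = "(nat \<Rightarrow> real) \<times> (nat \<Rightarrow> real)"   \<comment> \<open>(p, rho)\<close>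
type_synonym sample = "(nat \<Rightarrow> bool) \<times> (nat \<Rightarrow> bool)"

datatype dv = DZero | DStar | DOne

definition param_space_R :: "nat \<Rightarrow> param set" where
  "param_space_R N = {(p, r). (\<forall>i<N. 0 \<le> p i \<and> p i \<le> 1 \<and> 0 \<le> r i \<and> r i \<le> 1)
                           \<and> (\<forall>i\<ge>N. p i = 0 \<and> r i = 0)}"

definition R0 :: "nat \<Rightarrow> param set" where
  "R0 N = {(p, r). (\<forall>i\<ge>N. p i = 0) \<and> (\<forall>i. r i = 0)}"

definition param_dist :: "nat \<Rightarrow> param \<Rightarrow> param \<Rightarrow> real" where
  "param_dist N a b = sqrt (\<Sum>i<N. (fst a i - fst b i)^2 + (snd a i - snd b i)^2)"

definition nondegenerate :: "nat \<Rightarrow> param set \<Rightarrow> bool" where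
  "nondegenerate N \<Theta> \<longleftrightarrow> (\<exists>z \<in> \<Theta> \<inter> R0 N. \<exists>\<epsilon>>0.
      \<forall>w \<in> R0 N. param_dist N w z < \<epsilon> \<longrightarrow> w \<in> \<Theta> \<inter> R0 N)"

definition sample_space :: "nat \<Rightarrow> sample set" where
  "sample_space N = {(x, y). \<forall>i\<ge>N. \<not> x i \<and> \<not> y i}"

text \<open>Joint probability of \<open>(X_i, Y_i) = (a, b)\<close>.\<close>
definition pair_prob :: "real \<Rightarrow> real \<Rightarrow> bool \<Rightarrow> bool \<Rightarrow> real" where
  "pair_prob p r a b =
     (if a \<and> b then p^2 + r * p * (1 - p)
      else if \<not> a \<and> \<not> b then (1 - p)^2 + r * p * (1 - p)
      else (1 - r) * p * (1 - p))"

definition prob_pt :: "nat \<Rightarrow> param \<Rightarrow> sample \<Rightarrow> real" where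
  "prob_pt N \<theta> \<omega> = (if \<omega> \<in> sample_space N
      then (\<Prod>i<N. pair_prob (fst \<theta> i) (snd \<theta> i) (fst \<omega> i) (snd \<omega> i)) else 0)"

definition expect :: "nat \<Rightarrow> param \<Rightarrow> (sample \<Rightarrow> real) \<Rightarrow> real" where
  "expect N \<theta> g = (\<Sum>\<omega>\<in>sample_space N. prob_pt N \<theta> \<omega> * g \<omega>)"

definition dv_space :: "nat \<Rightarrow> (nat \<Rightarrow> dv) set" where
  "dv_space N = {h. \<forall>i\<ge>N. h i = DZero}"

definition disagreement :: "nat \<Rightarrow> sample \<Rightarrow> (nat \<Rightarrow> dv)" where
  "disagreement N \<omega> = (\<lambda>i. if i < N then
      (if fst \<omega> i \<and> snd \<omega> i then DOne
       else if \<not> fst \<omega> i \<and> \<not> snd \<omega> i then DZero else DStar)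
     else DZero)"

text \<open>Sufficiency (discrete sample space): there is a version of the conditional
  probability \<open>P(\<omega> | T = T \<omega>)\<close> not depending on \<open>\<theta>\<close>.\<close>
definition sufficient :: "nat \<Rightarrow> param set \<Rightarrow> (sample \<Rightarrow> 'b) \<Rightarrow> bool" where
  "sufficient N \<Theta> T \<longleftrightarrow> (\<exists>K :: sample \<Rightarrow> real. \<forall>\<theta>\<in>\<Theta>. \<forall>\<omega>\<in>sample_space N.
      prob_pt N \<theta> \<omega> = K \<omega> * (\<Sum>\<omega>'\<in>{\<omega>'\<in>sample_space N. T \<omega>' = T \<omega>}. prob_pt N \<theta> \<omega>'))"

definition complete_H :: "nat \<Rightarrow> param set \<Rightarrow> bool" where
  "complete_H N \<Theta> \<longleftrightarrow> (\<forall>f :: (nat \<Rightarrow> dv) \<Rightarrow> real.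
      (\<forall>\<theta>\<in>\<Theta>. expect N \<theta> (\<lambda>\<omega>. f (disagreement N \<omega>)) = 0)
      \<longrightarrow> (\<forall>h\<in>dv_space N. f h = 0))"

end

theory Submission
  imports Defs "HOL-Computational_Algebra.Polynomial"
begin

text \<open>Sufficiency: given the disagreement vector, the only information left in a sample is
  which of the two discordant outcomes (1,0), (0,1) occurred at each starred coordinate, and
  these two outcomes are equally likely under every parameter.

  Completeness: for uncorrelated parameters (\<open>\<rho> = 0\<close>) the expectation of \<open>f(\<H>)\<close> is
  \<open>\<Sum>\<^sub>h f(h) \<Prod>\<^sub>i m(p\<^sub>i, h\<^sub>i)\<close> with \<open>m(t,1) = t\<^sup>2\<close>, \<open>m(t,0) = (1-t)\<^sup>2\<close>, \<open>m(t,\<star>) = 2t(1-t)\<close>.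
  Nondegeneracy puts a whole open box of such parameters into \<open>\<Theta>\<close>. Peeling off the last
  coordinate, the expectation is a quadratic in \<open>p\<^sub>N\<close> in the Bernstein basis
  \<open>t\<^sup>2, (1-t)\<^sup>2, 2t(1-t)\<close>; it vanishes on an interval, so its three coefficients vanish, and
  induction on \<open>N\<close> gives \<open>f = 0\<close>.\<close>

lemma sum_UNIV_bool_pair:
  "(\<Sum>(a, b)\<in>UNIV. f a b) = f True True + f True False + f False True + f False False"
proof -
  have UNIV_eq: "(UNIV :: (bool \<times> bool) set) = {(True, True), (True, False), (False, True), (False, False)}"
    by auto
  show ?thesis unfolding UNIV_eq by (simp add: add.assoc)
qed

lemma prod_of_bool:
  "finite A \<Longrightarrow> (\<Prod>i\<in>A. of_bool (P i)) = (of_bool (\<forall>i\<in>A. P i) :: 'a :: comm_semiring_1)"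
  by (induction A rule: finite_induct) auto

lemma bernstein_quadratic_eq_0:
  fixes A B C :: real
  assumes "infinite S" and "\<And>t. t \<in> S \<Longrightarrow> t\<^sup>2 * A + (1 - t)\<^sup>2 * B + 2 * t * (1 - t) * C = 0"
  shows "A = 0 \<and> B = 0 \<and> C = 0"
proof -
  define q where "q = [:B, 2 * C - 2 * B, A + B - 2 * C:]"
  have "poly q t = t\<^sup>2 * A + (1 - t)\<^sup>2 * B + 2 * t * (1 - t) * C" for t
    by (simp add: q_def power2_eq_square algebra_simps)
  with assms have "S \<subseteq> {t. poly q t = 0}"
    by auto
  with \<open>infinite S\<close> have "q = 0"
    using poly_roots_finite finite_subset by blast
  then show ?thesis
    by (simp add: q_def)
qed

definition sample_upd :: "nat \<Rightarrow> sample \<Rightarrow> bool \<Rightarrow> bool \<Rightarrow> sample" where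
  "sample_upd n \<omega> a b = ((fst \<omega>)(n := a), (snd \<omega>)(n := b))"

lemma sample_space_0: "sample_space 0 = {(\<lambda>_. False, \<lambda>_. False)}"
  by (auto simp: sample_space_def)

lemma inj_on_sample_upd: "inj_on (\<lambda>(\<omega>, a, b). sample_upd n \<omega> a b) (sample_space n \<times> UNIV)"
  by (rule inj_on_inverseI[where
        g = "\<lambda>\<omega>. (((fst \<omega>)(n := False), (snd \<omega>)(n := False)), fst \<omega> n, snd \<omega> n)"])
    (auto simp: sample_space_def sample_upd_def fun_eq_iff)

lemma sample_space_Suc:
  "sample_space (Suc n) = (\<lambda>(\<omega>, a, b). sample_upd n \<omega> a b) ` (sample_space n \<times> UNIV)"
proof (intro equalityI subsetI)
  fix \<omega> assume "\<omega> \<in> sample_space (Suc n)"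
  then have "\<omega> = sample_upd n ((fst \<omega>)(n := False), (snd \<omega>)(n := False)) (fst \<omega> n) (snd \<omega> n)"
    and "((fst \<omega>)(n := False), (snd \<omega>)(n := False)) \<in> sample_space n"
    by (auto simp: sample_space_def sample_upd_def)
  then show "\<omega> \<in> (\<lambda>(\<omega>, a, b). sample_upd n \<omega> a b) ` (sample_space n \<times> UNIV)"
    by (intro image_eqI[where x = "(((fst \<omega>)(n := False), (snd \<omega>)(n := False)), fst \<omega> n, snd \<omega> n)"]) auto
qed (auto simp: sample_space_def sample_upd_def)

lemma sum_sample_space_Suc:
  "(\<Sum>\<omega>\<in>sample_space (Suc n). g \<omega>) = (\<Sum>\<omega>\<in>sample_space n. \<Sum>(a, b)\<in>UNIV. g (sample_upd n \<omega> a b))"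
  unfolding sample_space_Suc sum.reindex[OF inj_on_sample_upd]
  by (simp add: sum.cartesian_product split_def)

lemma finite_sample_space: "finite (sample_space n)"
  by (induction n) (simp_all add: sample_space_0 sample_space_Suc)

lemma sum_sample_space_prod:
  fixes g :: "nat \<Rightarrow> bool \<Rightarrow> bool \<Rightarrow> 'a :: comm_semiring_1"
  shows "(\<Sum>\<omega>\<in>sample_space n. \<Prod>i<n. g i (fst \<omega> i) (snd \<omega> i)) = (\<Prod>i<n. \<Sum>(a, b)\<in>UNIV. g i a b)"
proof (induction n)
  case 0
  then show ?case by (simp add: sample_space_0)
next
  case (Suc n)
  have "(\<Sum>\<omega>\<in>sample_space (Suc n). \<Prod>i<Suc n. g i (fst \<omega> i) (snd \<omega> i))
      = (\<Sum>\<omega>\<in>sample_space n. \<Sum>(a, b)\<in>UNIV. (\<Prod>i<n. g i (fst \<omega> i) (snd \<omega> i)) * g n a b)"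
    by (simp add: sum_sample_space_Suc sample_upd_def split_def)
  also have "\<dots> = (\<Sum>\<omega>\<in>sample_space n. \<Prod>i<n. g i (fst \<omega> i) (snd \<omega> i)) * (\<Sum>(a, b)\<in>UNIV. g n a b)"
    by (simp add: sum_product split_def)
  finally show ?case by (simp add: Suc.IH)
qed

lemma sample_upd_in_sample_space: "\<omega> \<in> sample_space n \<Longrightarrow> sample_upd n \<omega> a b \<in> sample_space (Suc n)"
  unfolding sample_space_Suc by (rule image_eqI[where x = "(\<omega>, a, b)"]) auto

lemma prob_pt_sample_upd:
  assumes "\<omega> \<in> sample_space n"
  shows "prob_pt (Suc n) \<theta> (sample_upd n \<omega> a b) = prob_pt n \<theta> \<omega> * pair_prob (fst \<theta> n) (snd \<theta> n) a b"
  using assms by (simp add: prob_pt_def sample_upd_in_sample_space) (simp add: sample_upd_def)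

lemma expect_Suc:
  "expect (Suc n) \<theta> g =
     (\<Sum>(a, b)\<in>UNIV. pair_prob (fst \<theta> n) (snd \<theta> n) a b * expect n \<theta> (\<lambda>\<omega>. g (sample_upd n \<omega> a b)))"
  unfolding expect_def sum_sample_space_Suc
  by (subst sum.swap) (simp add: sum_distrib_left prob_pt_sample_upd split_def algebra_simps cong: sum.cong)

definition dv_of :: "bool \<Rightarrow> bool \<Rightarrow> dv" where
  "dv_of a b = (if a \<and> b then DOne else if \<not> a \<and> \<not> b then DZero else DStar)"

lemma disagreement_eq: "disagreement N \<omega> = (\<lambda>i. if i < N then dv_of (fst \<omega> i) (snd \<omega> i) else DZero)"
  by (simp add: disagreement_def dv_of_def fun_eq_iff)

lemma disagreement_sample_upd:
  "disagreement (Suc n) (sample_upd n \<omega> a b) = (disagreement n \<omega>)(n := dv_of a b)"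
  by (auto simp: fun_eq_iff disagreement_eq sample_upd_def)

lemma sum_fiber_disagreement:
  fixes g :: "nat \<Rightarrow> bool \<Rightarrow> bool \<Rightarrow> 'a :: comm_semiring_1"
  shows "(\<Sum>\<omega>'\<in>{\<omega>'\<in>sample_space n. disagreement n \<omega>' = disagreement n \<omega>}. \<Prod>i<n. g i (fst \<omega>' i) (snd \<omega>' i))
    = (\<Prod>i<n. \<Sum>(a, b)\<in>UNIV. of_bool (dv_of a b = dv_of (fst \<omega> i) (snd \<omega> i)) * g i a b)"
proof -
  let ?same = "\<lambda>\<omega>' i. dv_of (fst \<omega>' i) (snd \<omega>' i) = dv_of (fst \<omega> i) (snd \<omega> i)"
  have "disagreement n \<omega>' = disagreement n \<omega> \<longleftrightarrow> (\<forall>i\<in>{..<n}. ?same \<omega>' i)" for \<omega>'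
    by (auto simp: disagreement_eq fun_eq_iff)
  then have "(\<Sum>\<omega>'\<in>{\<omega>'\<in>sample_space n. disagreement n \<omega>' = disagreement n \<omega>}. \<Prod>i<n. g i (fst \<omega>' i) (snd \<omega>' i))
    = (\<Sum>\<omega>'\<in>sample_space n. of_bool (\<forall>i\<in>{..<n}. ?same \<omega>' i) * (\<Prod>i<n. g i (fst \<omega>' i) (snd \<omega>' i)))"
    by (auto simp: sum.inter_filter[OF finite_sample_space] intro!: sum.cong)
  also have "\<dots> = (\<Sum>\<omega>'\<in>sample_space n. \<Prod>i<n. of_bool (?same \<omega>' i) * g i (fst \<omega>' i) (snd \<omega>' i))"
    by (simp add: prod.distrib prod_of_bool)
  also have "\<dots> = (\<Prod>i<n. \<Sum>(a, b)\<in>UNIV. of_bool (dv_of a b = dv_of (fst \<omega> i) (snd \<omega> i)) * g i a b)"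
    by (rule sum_sample_space_prod)
  finally show ?thesis .
qed

lemma sum_pair_prob_same_dv:
  "(\<Sum>(a, b)\<in>UNIV. of_bool (dv_of a b = dv_of x y) * pair_prob p r a b)
    = (if x = y then 1 else 2) * pair_prob p r x y"
  by (cases x; cases y) (simp_all add: sum_UNIV_bool_pair dv_of_def pair_prob_def)

lemma sufficient_disagreement: "sufficient N \<Theta> (disagreement N)"
  unfolding sufficient_def
proof (intro exI ballI)
  fix \<theta> :: param and \<omega> :: sample
  assume \<omega>: "\<omega> \<in> sample_space N"
  let ?fiber = "{\<omega>'\<in>sample_space N. disagreement N \<omega>' = disagreement N \<omega>}"
  define c where "c i = (if fst \<omega> i = snd \<omega> i then 1 else 2 :: real)" for i
  define q where "q i = pair_prob (fst \<theta> i) (snd \<theta> i) (fst \<omega> i) (snd \<omega> i)" for i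
  have "(\<Sum>\<omega>'\<in>?fiber. prob_pt N \<theta> \<omega>')
      = (\<Sum>\<omega>'\<in>?fiber. \<Prod>i<N. pair_prob (fst \<theta> i) (snd \<theta> i) (fst \<omega>' i) (snd \<omega>' i))"
    by (simp add: prob_pt_def)
  also have "\<dots> = (\<Prod>i<N. c i * q i)"
    unfolding sum_fiber_disagreement[where g = "\<lambda>i. pair_prob (fst \<theta> i) (snd \<theta> i)"]
    by (simp only: sum_pair_prob_same_dv c_def q_def)
  finally have fiber: "(\<Sum>\<omega>'\<in>?fiber. prob_pt N \<theta> \<omega>') = (\<Prod>i<N. c i * q i)" .
  have "prob_pt N \<theta> \<omega> = (\<Prod>i<N. (if fst \<omega> i = snd \<omega> i then 1 else 1 / 2) * (c i * q i))"
    using \<omega> by (auto simp: prob_pt_def q_def c_def intro!: prod.cong)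
  then show "prob_pt N \<theta> \<omega> = (\<lambda>\<omega>. \<Prod>i<N. if fst \<omega> i = snd \<omega> i then 1 else 1 / 2) \<omega>
      * (\<Sum>\<omega>'\<in>?fiber. prob_pt N \<theta> \<omega>')"
    by (simp add: fiber prod.distrib)
qed

lemma expect_cong_param:
  assumes "\<And>i. i < N \<Longrightarrow> fst \<theta> i = fst \<theta>' i \<and> snd \<theta> i = snd \<theta>' i"
  shows "expect N \<theta> g = expect N \<theta>' g"
  using assms unfolding expect_def prob_pt_def by (auto intro!: sum.cong prod.cong)

lemma expect_disagreement_Suc_uncorrelated:
  fixes n :: nat and p :: "nat \<Rightarrow> real" and F :: "(nat \<Rightarrow> dv) \<Rightarrow> real"
  defines "E e \<equiv> expect n (p, \<lambda>_. 0) (\<lambda>\<omega>. F ((disagreement n \<omega>)(n := e)))"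
  shows "expect (Suc n) (p, \<lambda>_. 0) (\<lambda>\<omega>. F (disagreement (Suc n) \<omega>))
    = (p n)\<^sup>2 * E DOne + (1 - p n)\<^sup>2 * E DZero + 2 * p n * (1 - p n) * E DStar"
  unfolding E_def expect_Suc disagreement_sample_upd sum_UNIV_bool_pair
  by (simp add: dv_of_def pair_prob_def algebra_simps)

lemma disagreement_complete_on_box:
  assumes "\<delta> > 0"
    and "\<And>p. \<forall>i<n. \<bar>p i - c i\<bar> < \<delta> \<Longrightarrow> expect n (p, \<lambda>_. 0) (\<lambda>\<omega>. F (disagreement n \<omega>)) = 0"
    and "h \<in> dv_space n"
  shows "F h = 0"
  using assms(2,3)
proof (induction n arbitrary: F h)
  case 0
  have "expect 0 (p, \<lambda>_. 0) (\<lambda>\<omega>. F (disagreement 0 \<omega>)) = F (\<lambda>_. DZero)" for p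
    by (simp add: expect_def sample_space_0 prob_pt_def disagreement_def)
  moreover have "h = (\<lambda>_. DZero)"
    using "0.prems"(2) by (auto simp: dv_space_def)
  ultimately show ?case
    using "0.prems"(1) by fastforce
next
  case (Suc n)
  define E where "E e p = expect n (p, \<lambda>_. 0) (\<lambda>\<omega>. F ((disagreement n \<omega>)(n := e)))" for e p
  have E_eq_0: "E e p = 0" if box: "\<forall>i<n. \<bar>p i - c i\<bar> < \<delta>" for e p
  proof -
    have indep: "E e (p(n := t)) = E e p" for e t
      unfolding E_def by (rule expect_cong_param) simp
    have "t\<^sup>2 * E DOne p + (1 - t)\<^sup>2 * E DZero p + 2 * t * (1 - t) * E DStar p = 0"
      if "t \<in> {c n - \<delta><..<c n + \<delta>}" for t
    proof -
      have "expect (Suc n) (p(n := t), \<lambda>_. 0) (\<lambda>\<omega>. F (disagreement (Suc n) \<omega>)) = 0"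
        using Suc.prems(1) box that by (simp add: less_Suc_eq abs_less_iff)
      then show ?thesis
        unfolding expect_disagreement_Suc_uncorrelated E_def[symmetric] indep fun_upd_same .
    qed
    moreover have "infinite {c n - \<delta><..<c n + \<delta>}"
      using \<open>\<delta> > 0\<close> by (intro infinite_Ioo) simp
    ultimately show ?thesis
      using bernstein_quadratic_eq_0 by (cases e) blast+
  qed
  have "F (h'(n := e)) = 0" if "h' \<in> dv_space n" for h' e
    using Suc.IH[of "\<lambda>h. F (h(n := e))"] E_eq_0 that unfolding E_def by blast
  from this[of "h(n := DZero)" "h n"] show ?case
    using Suc.prems(2) by (simp add: dv_space_def)
qed

lemma param_dist_less_sqrt:
  assumes "0 < N" and "\<And>i. i < N \<Longrightarrow> \<bar>fst a i - fst b i\<bar> < \<delta> \<and> snd a i = snd b i"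
  shows "param_dist N a b < sqrt (real N) * \<delta>"
proof -
  have "\<delta> > 0"
    using assms(2)[of 0] \<open>0 < N\<close> by linarith
  have "\<bar>fst a i - fst b i\<bar>\<^sup>2 < \<delta>\<^sup>2" if "i < N" for i
    using assms(2)[OF that] by (intro power_strict_mono) auto
  then have "(\<Sum>i<N. (fst a i - fst b i)\<^sup>2 + (snd a i - snd b i)\<^sup>2) < (\<Sum>i<N. \<delta>\<^sup>2)"
    using assms by (intro sum_strict_mono) auto
  then have "param_dist N a b < sqrt (real N * \<delta>\<^sup>2)"
    unfolding param_dist_def by (simp add: real_sqrt_less_mono)
  also have "\<dots> = sqrt (real N) * \<delta>"
    using \<open>\<delta> > 0\<close> by (simp add: real_sqrt_mult)
  finally show ?thesis .
qed

lemma nondegenerate_obtains_box: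
  assumes "nondegenerate N \<Theta>" and "0 < N"
  obtains c \<delta> where "\<delta> > 0"
    and "\<And>p. \<forall>i<N. \<bar>p i - c i\<bar> < \<delta> \<Longrightarrow> (\<lambda>i. if i < N then p i else 0, \<lambda>_. 0) \<in> \<Theta>"
proof -
  obtain z \<epsilon> where z: "z \<in> R0 N" and "\<epsilon> > 0"
    and ball: "\<forall>w\<in>R0 N. param_dist N w z < \<epsilon> \<longrightarrow> w \<in> \<Theta> \<inter> R0 N"
    using assms(1) unfolding nondegenerate_def by blast
  show thesis
  proof
    show "\<epsilon> / sqrt (real N) > 0"
      using \<open>\<epsilon> > 0\<close> \<open>0 < N\<close> by simp
  next
    fix p assume box: "\<forall>i<N. \<bar>p i - fst z i\<bar> < \<epsilon> / sqrt (real N)"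
    let ?w = "(\<lambda>i. if i < N then p i else 0, \<lambda>_. 0) :: param"
    have "param_dist N ?w z < sqrt (real N) * (\<epsilon> / sqrt (real N))"
      using box z \<open>0 < N\<close> by (intro param_dist_less_sqrt) (auto simp: R0_def)
    then have "param_dist N ?w z < \<epsilon>"
      using \<open>0 < N\<close> by simp
    moreover have "?w \<in> R0 N"
      by (simp add: R0_def)
    ultimately show "?w \<in> \<Theta>"
      using ball by blast
  qed
qed

theorem theorem1:
  fixes N :: nat and \<Theta> :: "param set"
  assumes "N \<ge> 1"
    and "\<Theta> \<subseteq> param_space_R N"
    and "nondegenerate N \<Theta>"
  shows "complete_H N \<Theta> \<and> sufficient N \<Theta> (disagreement N)"
proof
  have "0 < N"
    using assms(1) by simp
  then obtain c \<delta> where "\<delta> > 0"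
    and box: "\<And>p. \<forall>i<N. \<bar>p i - c i\<bar> < \<delta> \<Longrightarrow> (\<lambda>i. if i < N then p i else 0, \<lambda>_. 0) \<in> \<Theta>"
    using nondegenerate_obtains_box[OF assms(3)] by blast
  show "complete_H N \<Theta>"
    unfolding complete_H_def
  proof (intro allI impI ballI)
    fix F h
    assume zero: "\<forall>\<theta>\<in>\<Theta>. expect N \<theta> (\<lambda>\<omega>. F (disagreement N \<omega>)) = 0" and "h \<in> dv_space N"
    show "F h = 0"
    proof (rule disagreement_complete_on_box[OF \<open>\<delta> > 0\<close> _ \<open>h \<in> dv_space N\<close>])
      fix p assume "\<forall>i<N. \<bar>p i - c i\<bar> < \<delta>"
      then have "expect N (\<lambda>i. if i < N then p i else 0, \<lambda>_. 0) (\<lambda>\<omega>. F (disagreement N \<omega>)) = 0"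
        using zero box by blast
      then show "expect N (p, \<lambda>_. 0) (\<lambda>\<omega>. F (disagreement N \<omega>)) = 0"
        by (subst expect_cong_param[where \<theta>' = "(\<lambda>i. if i < N then p i else 0, \<lambda>_. 0)"]) auto
    qed
  qed
  show "sufficient N \<Theta> (disagreement N)"
    by (rule sufficient_disagreement)
qed

end
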